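(* Fix integers $k \ge 2$ and $1 \le t \le k$. Let $X$ be a set of $n$ elements carrying a fixed but unknown total order, and suppose we have a $(k,t)$ scale, which on input any $k$-element subset of $X$ returns the $t$-th smallest element of that subset. Let $S$ be the set of the $t-1$ smallest elements of $X$ and $L$ the set of the $k-t$ largest elements of $X$. Then there is an adaptive (on-line) procedure, using $O(n \log n)$ queries (for fixed $k$ and $t$, as $n \to \infty$), which identifies the set $S \cup L$ and determines the relative order of all elements of $X \setminus (S \cup L)$; if the scale is symmetric, i.e. $t = (k+1)/2$, the order is determined up to reversal.
   Context: A query consists of submitting a $k$-element subset of $X$ to the scale and receiving its output. In the on-line setting each query may be chosen depending on the results of previous queries. The ordering of the elements of $S$ and of $L$ can never be determined, since these elements are never returned by any query. *)

theory Defs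
  imports Complex_Main
begin

text \<open>Ground set X = {..<n}. The fixed but unknown total order on X is given by a
rank bijection r : X -> {..<n}; x precedes y iff r x < r y.\<close>

definition scale :: "nat \<Rightarrow> (nat \<Rightarrow> nat) \<Rightarrow> nat set \<Rightarrow> nat" where
  "scale t r Q = (THE x. x \<in> Q \<and> card {y \<in> Q. r y < r x} = t - 1)"

text \<open>Adaptive (on-line) query procedures as decision trees: a node submits a set
to the scale and branches on the returned element; a leaf outputs a set
(claimed to be S \<union> L) and a list (the claimed order of the remaining elements).\<close>
datatype qtree = Leaf "nat set \<times> nat list" | Query "nat set" "nat \<Rightarrow> qtree"

primrec result :: "nat \<Rightarrow> qtree \<Rightarrow> (nat \<Rightarrow> nat) \<Rightarrow> nat set \<times> nat list" where
  "result t (Leaf o') r = o'"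
| "result t (Query Q f) r = result t (f (scale t r Q)) r"

primrec cost :: "nat \<Rightarrow> qtree \<Rightarrow> (nat \<Rightarrow> nat) \<Rightarrow> nat" where
  "cost t (Leaf o') r = 0"
| "cost t (Query Q f) r = Suc (cost t (f (scale t r Q)) r)"

primrec valid_run :: "nat \<Rightarrow> nat \<Rightarrow> nat \<Rightarrow> qtree \<Rightarrow> (nat \<Rightarrow> nat) \<Rightarrow> bool" where
  "valid_run k t n (Leaf o') r = True"
| "valid_run k t n (Query Q f) r =
     (Q \<subseteq> {..<n} \<and> card Q = k \<and> valid_run k t n (f (scale t r Q)) r)"

definition smallS :: "nat \<Rightarrow> nat \<Rightarrow> (nat \<Rightarrow> nat) \<Rightarrow> nat set" where
  "smallS t n r = {x \<in> {..<n}. r x < t - 1}"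

definition largeL :: "nat \<Rightarrow> nat \<Rightarrow> nat \<Rightarrow> (nat \<Rightarrow> nat) \<Rightarrow> nat set" where
  "largeL k t n r = {x \<in> {..<n}. n - (k - t) \<le> r x}"

definition correct_output ::
  "nat \<Rightarrow> nat \<Rightarrow> nat \<Rightarrow> (nat \<Rightarrow> nat) \<Rightarrow> nat set \<times> nat list \<Rightarrow> bool" where
  "correct_output k t n r out =
     (fst out = smallS t n r \<union> largeL k t n r \<and>
      set (snd out) = {..<n} - (smallS t n r \<union> largeL k t n r) \<and>
      (sorted_wrt (\<lambda>x y. r x < r y) (snd out) \<or>
       (2 * t = k + 1 \<and> sorted_wrt (\<lambda>x y. r y < r x) (snd out))))"

end

theory Submission
  imports Defs "HOL-Library.Multiset" "HOL-Library.Log_Nat" "HOL-Real_Asymp.Real_Asymp"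
begin

text \<open>A query to the scale on a \<open>k\<close>-set \<open>Q\<close> returns an element with \<open>t - 1\<close> elements of \<open>Q\<close> below
it and \<open>k - t\<close> above it, so the answer is never in \<open>S \<union> L\<close>. Hence a tournament that keeps
\<open>k - 1\<close> candidates, adds one new element per query and discards the answer ends, after
\<open>n - k + 1\<close> queries, with exactly \<open>S \<union> L\<close>. Once \<open>S \<union> L\<close> is known, fix \<open>c \<in> S \<union> L\<close>: on
\<open>(S \<union> L - {c}) \<union> {x, y}\<close> the scale returns the smaller of \<open>x, y\<close> if \<open>c \<in> L\<close> and the larger
if \<open>c \<in> S\<close>. This is a comparison of fixed but unknown direction, so merge sort orders
\<open>X - (S \<union> L)\<close> with \<open>O(n log n)\<close> queries, and one final query on the first \<open>k\<close> sorted
elements reveals the direction, unless the scale is symmetric.\<close>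

text \<open>Query procedures with results of any type, so that they compose monadically; \<open>qtree_of\<close>
turns a procedure producing the final output into a decision tree.\<close>

datatype 'a comp = Ret 'a | Ask "nat set" "nat \<Rightarrow> 'a comp"

primrec bind_comp :: "'a comp \<Rightarrow> ('a \<Rightarrow> 'b comp) \<Rightarrow> 'b comp" where
  "bind_comp (Ret a) f = f a"
| "bind_comp (Ask Q g) f = Ask Q (\<lambda>q. bind_comp (g q) f)"

primrec run_comp :: "(nat set \<Rightarrow> nat) \<Rightarrow> 'a comp \<Rightarrow> 'a" where
  "run_comp ans (Ret a) = a"
| "run_comp ans (Ask Q g) = run_comp ans (g (ans Q))"

primrec cost_comp :: "(nat set \<Rightarrow> nat) \<Rightarrow> 'a comp \<Rightarrow> nat" where
  "cost_comp ans (Ret a) = 0"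
| "cost_comp ans (Ask Q g) = Suc (cost_comp ans (g (ans Q)))"

primrec queries_ok :: "(nat set \<Rightarrow> bool) \<Rightarrow> (nat set \<Rightarrow> nat) \<Rightarrow> 'a comp \<Rightarrow> bool" where
  "queries_ok P ans (Ret a) = True"
| "queries_ok P ans (Ask Q g) = (P Q \<and> queries_ok P ans (g (ans Q)))"

lemma run_bind_comp [simp]: "run_comp ans (bind_comp m f) = run_comp ans (f (run_comp ans m))"
  by (induction m) auto

lemma cost_bind_comp [simp]:
  "cost_comp ans (bind_comp m f) = cost_comp ans m + cost_comp ans (f (run_comp ans m))"
  by (induction m) auto

lemma queries_ok_bind_comp [simp]:
  "queries_ok P ans (bind_comp m f) \<longleftrightarrow> queries_ok P ans m \<and> queries_ok P ans (f (run_comp ans m))"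
  by (induction m) auto

definition admissible_query :: "nat \<Rightarrow> nat \<Rightarrow> nat set \<Rightarrow> bool" where
  "admissible_query k n Q \<longleftrightarrow> Q \<subseteq> {..<n} \<and> card Q = k"

primrec qtree_of :: "(nat set \<times> nat list) comp \<Rightarrow> qtree" where
  "qtree_of (Ret a) = Leaf a"
| "qtree_of (Ask Q g) = Query Q (\<lambda>q. qtree_of (g q))"

lemma result_qtree_of: "result t (qtree_of m) r = run_comp (scale t r) m"
  by (induction m) auto

lemma cost_qtree_of: "cost t (qtree_of m) r = cost_comp (scale t r) m"
  by (induction m) auto

lemma valid_run_qtree_of:
  "valid_run k t n (qtree_of m) r = queries_ok (admissible_query k n) (scale t r) m"
  by (induction m) (auto simp: admissible_query_def)


section \<open>The scale on a sorted list\<close>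

lemma distinct_if_sorted_wrt_irrefl: "(\<And>x. \<not> R x x) \<Longrightarrow> sorted_wrt R xs \<Longrightarrow> distinct xs"
  by (induction xs) auto

lemma sorted_wrt_key_nth_less_iff:
  fixes r :: "'a \<Rightarrow> 'b :: linorder"
  assumes "sorted_wrt (\<lambda>x y. r x < r y) ys" "i < length ys" "j < length ys"
  shows "r (ys ! j) < r (ys ! i) \<longleftrightarrow> j < i"
  using assms sorted_wrt_nth_less[OF assms(1)] by (metis less_asym linorder_neqE_nat)

lemma card_less_nth_sorted_wrt_key:
  fixes r :: "'a \<Rightarrow> 'b :: linorder"
  assumes sorted: "sorted_wrt (\<lambda>x y. r x < r y) ys" and i: "i < length ys"
  shows "card {y \<in> set ys. r y < r (ys ! i)} = i"
proof -
  have "{y \<in> set ys. r y < r (ys ! i)} = nth ys ` {0..<i}"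
    unfolding set_conv_nth using sorted_wrt_key_nth_less_iff[OF sorted i] i by auto
  also have "\<dots> = set (take i ys)"
    using i by (simp add: nth_image)
  finally show ?thesis
    using i distinct_if_sorted_wrt_irrefl[OF _ sorted] by (simp add: distinct_card)
qed

lemma sorted_wrt_key_enumeration:
  fixes r :: "'a \<Rightarrow> 'b :: linorder"
  assumes "finite Q" "inj_on r Q"
  obtains ys where "set ys = Q" "sorted_wrt (\<lambda>x y. r x < r y) ys"
proof -
  interpret folding_insort_key "(\<le>)" "(<)" Q r
    using assms(2) by unfold_locales
  obtain ys where "sorted_wrt (<) (map r ys)" "set ys = Q"
    using finite_set_strict_sorted[OF order_refl assms(1)] by blast
  then show thesis
    using that by (simp add: sorted_wrt_map)
qed

lemma strict_sorted_nth_bounds: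
  fixes zs :: "nat list"
  assumes sorted: "sorted_wrt (<) zs" and bounded: "set zs \<subseteq> {..<n}" and i: "i < length zs"
  shows "i \<le> zs ! i" and "zs ! i + (length zs - i) \<le> n"
proof -
  show "i \<le> zs ! i"
    using sorted i by (rule sorted_wrt_less_idx)
  have "zs ! i \<le> zs ! (i + j) \<and> zs ! (i + j) < n" if "i + j < length zs" for j
  proof -
    have "zs ! (i + j) < n"
      using bounded nth_mem[OF that] by blast
    then show ?thesis
      using sorted_wrt_nth_less[OF sorted, of i "i + j"] that by (cases j) auto
  qed
  then have "set (drop i zs) \<subseteq> {zs ! i..<n}"
    by (auto simp: in_set_conv_nth)
  then have "card (set (drop i zs)) \<le> n - zs ! i"
    using card_mono[of "{zs ! i..<n}"] by fastforce
  moreover have "distinct zs"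
    using sorted by (simp add: strict_sorted_iff)
  ultimately show "zs ! i + (length zs - i) \<le> n"
    using i by (simp add: distinct_card)
qed

lemma scale_sorted:
  assumes sorted: "sorted_wrt (\<lambda>x y. r x < r y) ys" and t: "t - 1 < length ys"
  shows "scale t r (set ys) = ys ! (t - 1)"
  unfolding scale_def
proof (rule the_equality)
  show "ys ! (t - 1) \<in> set ys \<and> card {y \<in> set ys. r y < r (ys ! (t - 1))} = t - 1"
    using card_less_nth_sorted_wrt_key[OF sorted t] t by simp
  fix x assume "x \<in> set ys \<and> card {y \<in> set ys. r y < r x} = t - 1"
  then obtain j where "j < length ys" "x = ys ! j" "card {y \<in> set ys. r y < r (ys ! j)} = t - 1"
    by (auto simp: in_set_conv_nth)
  then show "x = ys ! (t - 1)"
    using card_less_nth_sorted_wrt_key[OF sorted] by simp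
qed

lemma scale_eqI:
  assumes "finite Q" "inj_on r Q" "x \<in> Q" "card {y \<in> Q. r y < r x} = t - 1"
  shows "scale t r Q = x"
proof -
  obtain ys where ys: "set ys = Q" "sorted_wrt (\<lambda>x y. r x < r y) ys"
    using sorted_wrt_key_enumeration[OF assms(1,2)] .
  then obtain j where j: "j < length ys" "x = ys ! j"
    using assms(3) by (auto simp: in_set_conv_nth)
  have "j = t - 1"
    using card_less_nth_sorted_wrt_key[OF ys(2) j(1)] assms(4) ys(1) j(2) by simp
  then show ?thesis
    using scale_sorted[OF ys(2)] j ys(1) by simp
qed


section \<open>Merge sort driven by queries\<close>

fun merge_comp :: "(nat \<Rightarrow> nat \<Rightarrow> nat set) \<Rightarrow> nat list \<Rightarrow> nat list \<Rightarrow> nat list comp" where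
  "merge_comp Qf [] ys = Ret ys"
| "merge_comp Qf xs [] = Ret xs"
| "merge_comp Qf (x # xs) (y # ys) = Ask (Qf x y) (\<lambda>q.
     if q = x then bind_comp (merge_comp Qf xs (y # ys)) (\<lambda>zs. Ret (x # zs))
     else bind_comp (merge_comp Qf (x # xs) ys) (\<lambda>zs. Ret (y # zs)))"

fun msort_comp :: "(nat \<Rightarrow> nat \<Rightarrow> nat set) \<Rightarrow> nat list \<Rightarrow> nat list comp" where
  "msort_comp Qf xs = (if length xs \<le> 1 then Ret xs else
     bind_comp (msort_comp Qf (take (length xs div 2) xs)) (\<lambda>as.
     bind_comp (msort_comp Qf (drop (length xs div 2) xs)) (\<lambda>bs. merge_comp Qf as bs)))"

declare msort_comp.simps [simp del]

definition query_compares ::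
  "(nat set \<Rightarrow> nat) \<Rightarrow> (nat \<Rightarrow> nat \<Rightarrow> nat set) \<Rightarrow> (nat \<Rightarrow> nat \<Rightarrow> bool) \<Rightarrow> nat set \<Rightarrow> bool" where
  "query_compares ans Qf R A \<longleftrightarrow> (\<forall>x\<in>A. \<forall>y\<in>A. x \<noteq> y \<longrightarrow> (ans (Qf x y) = x \<longleftrightarrow> R x y))"

lemma query_comparesD:
  "query_compares ans Qf R A \<Longrightarrow> x \<in> A \<Longrightarrow> y \<in> A \<Longrightarrow> x \<noteq> y \<Longrightarrow> ans (Qf x y) = x \<longleftrightarrow> R x y"
  by (simp add: query_compares_def)

lemma mset_run_merge_comp [simp]:
  "mset (run_comp ans (merge_comp Qf xs ys)) = mset xs + mset ys"
  by (induction Qf xs ys rule: merge_comp.induct) auto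

lemma cost_merge_comp: "cost_comp ans (merge_comp Qf xs ys) \<le> length xs + length ys"
  by (induction Qf xs ys rule: merge_comp.induct) auto

lemma queries_ok_merge_comp:
  "\<forall>x\<in>set xs. \<forall>y\<in>set ys. P (Qf x y) \<Longrightarrow> queries_ok P ans (merge_comp Qf xs ys)"
  by (induction Qf xs ys rule: merge_comp.induct) auto

lemma sorted_run_merge_comp:
  assumes "transp R" "totalp_on A R"
  shows "query_compares ans Qf R A \<Longrightarrow> set xs \<subseteq> A \<Longrightarrow> set ys \<subseteq> A \<Longrightarrow> set xs \<inter> set ys = {} \<Longrightarrow>
    sorted_wrt R xs \<Longrightarrow> sorted_wrt R ys \<Longrightarrow> sorted_wrt R (run_comp ans (merge_comp Qf xs ys))"
proof (induction Qf xs ys rule: merge_comp.induct)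
  case (3 Qf x xs y ys)
  have set_run: "set (run_comp ans (merge_comp Qf as bs)) = set as \<union> set bs" for as bs
    by (metis mset_run_merge_comp set_mset_mset set_mset_union)
  have xy: "x \<in> A" "y \<in> A" "x \<noteq> y"
    using "3.prems" by auto
  show ?case
  proof (cases "ans (Qf x y) = x")
    case True
    then have "R x y"
      using query_comparesD[OF "3.prems"(1) xy] by simp
    then have "\<forall>z\<in>set xs \<union> set (y # ys). R x z"
      using "3.prems"(5,6) by (auto intro: transpD[OF assms(1), of x y])
    moreover have "sorted_wrt R (run_comp ans (merge_comp Qf xs (y # ys)))"
      using "3.IH"(1)[OF True] "3.prems" by auto
    ultimately show ?thesis
      using True by (simp add: set_run)
  next
    case False
    then have "R y x"
      using query_comparesD[OF "3.prems"(1) xy] xy assms(2) by (auto simp: totalp_on_def)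
    then have "\<forall>z\<in>set (x # xs) \<union> set ys. R y z"
      using "3.prems"(5,6) by (auto intro: transpD[OF assms(1), of y x])
    moreover have "sorted_wrt R (run_comp ans (merge_comp Qf (x # xs) ys))"
      using "3.IH"(2)[OF False] "3.prems" by auto
    ultimately show ?thesis
      using False by (simp add: set_run)
  qed
qed auto

lemma mset_run_msort_comp [simp]: "mset (run_comp ans (msort_comp Qf xs)) = mset xs"
proof (induction Qf xs rule: msort_comp.induct)
  case (1 Qf xs)
  then show ?case
    by (subst msort_comp.simps) (simp flip: mset_append)
qed

lemma set_run_msort_comp [simp]: "set (run_comp ans (msort_comp Qf xs)) = set xs"
  by (metis mset_run_msort_comp set_mset_mset)

lemma length_run_msort_comp [simp]: "length (run_comp ans (msort_comp Qf xs)) = length xs"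
  by (metis mset_run_msort_comp size_mset)

lemma cost_msort_comp:
  "length xs \<le> 2 ^ L \<Longrightarrow> cost_comp ans (msort_comp Qf xs) \<le> length xs * L"
proof (induction Qf xs arbitrary: L rule: msort_comp.induct)
  case (1 Qf xs)
  show ?case
  proof (cases "length xs \<le> 1")
    case False
    then obtain L' where L: "L = Suc L'"
      using "1.prems" by (cases L) auto
    let ?as = "take (length xs div 2) xs" and ?bs = "drop (length xs div 2) xs"
    have halves: "length ?as \<le> 2 ^ L'" "length ?bs \<le> 2 ^ L'"
      using "1.prems" L by auto
    have "cost_comp ans (msort_comp Qf xs) \<le> length ?as * L' + length ?bs * L' + length xs"
      using "1.IH"(1)[OF False halves(1)] "1.IH"(2)[OF False halves(2)]
        cost_merge_comp[of ans Qf "run_comp ans (msort_comp Qf ?as)" "run_comp ans (msort_comp Qf ?bs)"]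
      by (subst msort_comp.simps) (simp add: False)
    also have "\<dots> = length xs * L"
      using L by (simp add: algebra_simps flip: add_mult_distrib)
    finally show ?thesis .
  qed (subst msort_comp.simps, simp)
qed

lemma queries_ok_msort_comp:
  "distinct xs \<Longrightarrow> \<forall>x\<in>set xs. \<forall>y\<in>set xs. x \<noteq> y \<longrightarrow> P (Qf x y) \<Longrightarrow>
    queries_ok P ans (msort_comp Qf xs)"
proof (induction Qf xs rule: msort_comp.induct)
  case (1 Qf xs)
  show ?case
  proof (cases "length xs \<le> 1")
    case False
    let ?as = "take (length xs div 2) xs" and ?bs = "drop (length xs div 2) xs"
    have "set ?as \<inter> set ?bs = {}"
      using "1.prems"(1) by (rule set_take_disj_set_drop_if_distinct) simp
    then have "queries_ok P ans (merge_comp Qf (run_comp ans (msort_comp Qf ?as))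
        (run_comp ans (msort_comp Qf ?bs)))"
      using "1.prems"(2) by (intro queries_ok_merge_comp ballI)
        (metis disjoint_iff in_set_dropD in_set_takeD set_run_msort_comp)
    moreover have "queries_ok P ans (msort_comp Qf ?as)" "queries_ok P ans (msort_comp Qf ?bs)"
      using "1.IH" False "1.prems" by (auto dest: in_set_takeD in_set_dropD)
    ultimately show ?thesis
      by (subst msort_comp.simps) (simp add: False)
  qed (subst msort_comp.simps, simp)
qed

lemma sorted_run_msort_comp:
  assumes "transp R" "totalp_on A R"
  shows "query_compares ans Qf R A \<Longrightarrow> set xs \<subseteq> A \<Longrightarrow> distinct xs \<Longrightarrow>
    sorted_wrt R (run_comp ans (msort_comp Qf xs))"
proof (induction Qf xs rule: msort_comp.induct)
  case (1 Qf xs)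
  show ?case
  proof (cases "length xs \<le> 1")
    case False
    let ?as = "take (length xs div 2) xs" and ?bs = "drop (length xs div 2) xs"
    have "sorted_wrt R (run_comp ans (msort_comp Qf ?as))"
      "sorted_wrt R (run_comp ans (msort_comp Qf ?bs))"
      using "1.IH" False "1.prems" by (auto dest: in_set_takeD in_set_dropD)
    moreover have "set ?as \<inter> set ?bs = {}"
      using "1.prems"(3) by (rule set_take_disj_set_drop_if_distinct) simp
    ultimately have "sorted_wrt R (run_comp ans (merge_comp Qf (run_comp ans (msort_comp Qf ?as))
        (run_comp ans (msort_comp Qf ?bs))))"
      using "1.prems"(1,2) by (intro sorted_run_merge_comp[OF assms])
        (auto dest: in_set_takeD in_set_dropD)
    then show ?thesis
      by (subst msort_comp.simps) (simp add: sorted_wrt01)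
  qed (subst msort_comp.simps, simp add: sorted_wrt01)
qed


section \<open>Orienting a monotone list\<close>

definition orient_comp :: "nat \<Rightarrow> nat \<Rightarrow> nat list \<Rightarrow> nat list comp" where
  "orient_comp k t ms = Ask (set (take k ms)) (\<lambda>q. Ret (if q = ms ! (t - 1) then ms else rev ms))"

text \<open>If \<open>ms\<close> decreases, the answer is \<open>ms ! (k - t)\<close>, which coincides with \<open>ms ! (t - 1)\<close>
only for a symmetric scale.\<close>

lemma sorted_run_orient_comp:
  assumes t: "1 \<le> t" "t \<le> k" "k \<le> length ms"
    and sorted: "sorted_wrt (\<lambda>x y. r x < r y) ms \<or> sorted_wrt (\<lambda>x y. r y < r x) ms"
  defines "os \<equiv> run_comp (scale t r) (orient_comp k t ms)"
  shows "sorted_wrt (\<lambda>x y. r x < r y) os \<or> (2 * t = k + 1 \<and> sorted_wrt (\<lambda>x y. r y < r x) os)"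
  using sorted
proof
  assume inc: "sorted_wrt (\<lambda>x y. r x < r y) ms"
  then have "scale t r (set (take k ms)) = ms ! (t - 1)"
    using scale_sorted[of r "take k ms" t] t by (simp add: sorted_wrt_take)
  then show ?thesis
    using inc by (simp add: os_def orient_comp_def)
next
  assume dec: "sorted_wrt (\<lambda>x y. r y < r x) ms"
  then have "sorted_wrt (\<lambda>x y. r x < r y) (rev (take k ms))"
    by (simp add: sorted_wrt_rev sorted_wrt_take)
  then have "scale t r (set (take k ms)) = rev (take k ms) ! (t - 1)"
    using scale_sorted[of r "rev (take k ms)" t] t by simp
  also have "\<dots> = ms ! (k - t)"
    using t by (simp add: rev_nth)
  finally have q: "scale t r (set (take k ms)) = ms ! (k - t)" .
  show ?thesis
  proof (cases "ms ! (k - t) = ms ! (t - 1)")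
    case True
    have "distinct ms"
      using dec by (rule distinct_if_sorted_wrt_irrefl[rotated]) simp
    then have "k - t = t - 1"
      using True t nth_eq_iff_index_eq by fastforce
    then have "2 * t = k + 1"
      using t by linarith
    then show ?thesis
      using dec q True by (simp add: os_def orient_comp_def)
  next
    case False
    then show ?thesis
      using dec q by (simp add: os_def orient_comp_def sorted_wrt_rev)
  qed
qed


section \<open>The algorithm\<close>

primrec tournament :: "nat set \<Rightarrow> nat list \<Rightarrow> nat set comp" where
  "tournament C [] = Ret C"
| "tournament C (x # xs) = Ask (insert x C) (\<lambda>q. tournament (insert x C - {q}) xs)"

lemma cost_tournament [simp]: "cost_comp ans (tournament C xs) = length xs"
  by (induction xs arbitrary: C) auto

definition extremes_and_order :: "nat \<Rightarrow> nat \<Rightarrow> nat \<Rightarrow> (nat set \<times> nat list) comp" where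
  "extremes_and_order k t n =
     bind_comp (tournament {..<k - 1} [k - 1..<n]) (\<lambda>C.
     bind_comp (msort_comp (\<lambda>x y. (C - {Min C}) \<union> {x, y}) (filter (\<lambda>x. x \<notin> C) [0..<n])) (\<lambda>ms.
     bind_comp (orient_comp k t ms) (\<lambda>os. Ret (C, os))))"

locale hidden_order =
  fixes k t n :: nat and r :: "nat \<Rightarrow> nat"
  assumes k_ge_2: "2 \<le> k" and t_pos: "1 \<le> t" and t_le_k: "t \<le> k"
    and rank_bij: "bij_betw r {..<n} {..<n}" and n_large: "2 * k \<le> n"
begin

abbreviation "small \<equiv> smallS t n r"
abbreviation "large \<equiv> largeL k t n r"
abbreviation "extreme \<equiv> small \<union> large"
abbreviation "middle \<equiv> {..<n} - extreme"

lemma inj_on_rank: "Q \<subseteq> {..<n} \<Longrightarrow> inj_on r Q"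
  using rank_bij by (auto simp: bij_betw_def intro: inj_on_subset)

lemma rank_less: "x < n \<Longrightarrow> r x < n"
  using rank_bij by (auto simp: bij_betw_def)

lemma rank_less_or_greater: "x < n \<Longrightarrow> y < n \<Longrightarrow> x \<noteq> y \<Longrightarrow> r x < r y \<or> r y < r x"
  using inj_on_rank[of "{x, y}"] by (auto simp: linorder_neq_iff)

lemma card_rank_preimage: "card {x \<in> {..<n}. P (r x)} = card {i \<in> {..<n}. P i}"
proof -
  have "r ` {x \<in> {..<n}. P (r x)} = {i \<in> {..<n}. P i}"
    using rank_bij by (auto simp: bij_betw_def)
  then show ?thesis
    by (metis (no_types, lifting) card_image inj_on_rank mem_Collect_eq subsetI)
qed

lemma card_small: "card small = t - 1"
proof -
  have "card small = card {i \<in> {..<n}. i < t - 1}"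
    unfolding smallS_def by (rule card_rank_preimage)
  also have "{i \<in> {..<n}. i < t - 1} = {..<t - 1}"
    using n_large t_le_k by auto
  finally show ?thesis
    by simp
qed

lemma card_large: "card large = k - t"
proof -
  have "card large = card {i \<in> {..<n}. n - (k - t) \<le> i}"
    unfolding largeL_def by (rule card_rank_preimage)
  also have "{i \<in> {..<n}. n - (k - t) \<le> i} = {n - (k - t)..<n}"
    by auto
  finally show ?thesis
    using n_large by simp
qed

lemma small_large_disjoint: "small \<inter> large = {}"
  using n_large t_le_k by (auto simp: smallS_def largeL_def)

lemma extreme_subset: "extreme \<subseteq> {..<n}"
  by (auto simp: smallS_def largeL_def)

lemma finite_extreme: "finite extreme"
  using extreme_subset finite_subset by blast

lemma card_extreme: "card extreme = k - 1"
  using card_Un_disjoint[OF _ _ small_large_disjoint] finite_extreme card_small card_large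
    t_pos t_le_k by simp

lemma card_middle: "card middle = n - (k - 1)"
  using card_Diff_subset[OF finite_extreme extreme_subset] card_extreme by simp

lemma mem_middle: "x \<in> middle \<longleftrightarrow> x < n \<and> t - 1 \<le> r x \<and> r x < n - (k - t)"
  by (auto simp: smallS_def largeL_def)

lemma scale_in_middle:
  assumes Q: "Q \<subseteq> {..<n}" "card Q = k"
  shows "scale t r Q \<in> Q \<inter> middle"
proof -
  obtain ys where ys: "set ys = Q" "sorted_wrt (\<lambda>x y. r x < r y) ys"
    using sorted_wrt_key_enumeration[OF finite_subset[OF Q(1)] inj_on_rank[OF Q(1)]] by blast
  have len: "length ys = k"
    using Q(2) ys distinct_card[OF distinct_if_sorted_wrt_irrefl[OF _ ys(2)]] by simp
  have t: "t - 1 < length ys"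
    using len t_pos t_le_k by simp
  have zs: "sorted_wrt (<) (map r ys)" "set (map r ys) \<subseteq> {..<n}"
    using ys Q(1) rank_less by (auto simp: sorted_wrt_map)
  have "t - 1 \<le> r (ys ! (t - 1))" "r (ys ! (t - 1)) + (k - (t - 1)) \<le> n"
    using strict_sorted_nth_bounds[OF zs, of "t - 1"] t len by auto
  then have "ys ! (t - 1) \<in> middle"
    unfolding mem_middle using nth_mem[OF t] ys(1) Q(1) t_pos t_le_k by auto
  then show ?thesis
    using scale_sorted[OF ys(2) t] nth_mem[OF t] ys(1) by simp
qed

text \<open>By \<open>scale_in_middle\<close>, an extreme candidate is never discarded.\<close>

lemma tournament_finds_extreme:
  "C \<inter> set xs = {} \<Longrightarrow> distinct xs \<Longrightarrow> C \<union> set xs \<subseteq> {..<n} \<Longrightarrow> card C = k - 1 \<Longrightarrow>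
    extreme \<subseteq> C \<union> set xs \<Longrightarrow>
    run_comp (scale t r) (tournament C xs) = extreme \<and>
    queries_ok (admissible_query k n) (scale t r) (tournament C xs)"
proof (induction xs arbitrary: C)
  case Nil
  have "finite C"
    using Nil.prems(3) finite_subset by auto
  then have "extreme = C"
    by (rule card_subset_eq) (use Nil.prems card_extreme in simp_all)
  then show ?case
    by simp
next
  case (Cons x xs)
  let ?Q = "insert x C"
  let ?q = "scale t r ?Q"
  have fin: "finite C"
    using Cons.prems(3) finite_subset by auto
  have Q: "?Q \<subseteq> {..<n}" "card ?Q = k"
    using Cons.prems(1,3,4) fin k_ge_2 by auto
  then have q: "?q \<in> ?Q" "?q \<notin> extreme"
    using scale_in_middle[OF Q] by auto
  have "card (?Q - {?q}) = k - 1"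
    using Q q fin by simp
  moreover have "extreme \<subseteq> (?Q - {?q}) \<union> set xs"
    using Cons.prems(5) q(2) by auto
  ultimately have "run_comp (scale t r) (tournament (?Q - {?q}) xs) = extreme \<and>
    queries_ok (admissible_query k n) (scale t r) (tournament (?Q - {?q}) xs)"
    using Cons.prems(1-3) by (intro Cons.IH) auto
  moreover have "admissible_query k n ?Q"
    using Q by (simp add: admissible_query_def)
  ultimately show ?case
    by simp
qed

lemma tournament_initial:
  "run_comp (scale t r) (tournament {..<k - 1} [k - 1..<n]) = extreme \<and>
    queries_ok (admissible_query k n) (scale t r) (tournament {..<k - 1} [k - 1..<n])"
proof (rule tournament_finds_extreme)
  show "extreme \<subseteq> {..<k - 1} \<union> set [k - 1..<n]"
    using extreme_subset by auto
qed (use n_large in auto)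

lemma scale_pair_query_large:
  assumes c: "c \<in> large" and a: "a \<in> middle" and b: "b \<in> middle" and ab: "r a < r b"
  shows "scale t r ((extreme - {c}) \<union> {a, b}) = a"
proof (rule scale_eqI)
  let ?Q = "(extreme - {c}) \<union> {a, b}"
  show "finite ?Q"
    using finite_extreme by simp
  show "inj_on r ?Q"
    using extreme_subset a b by (intro inj_on_rank) auto
  have "{z \<in> ?Q. r z < r a} = small"
    using c a b ab small_large_disjoint by (auto simp: smallS_def largeL_def)
  then show "card {z \<in> ?Q. r z < r a} = t - 1"
    using card_small by simp
qed simp

lemma scale_pair_query_small:
  assumes c: "c \<in> small" and a: "a \<in> middle" and b: "b \<in> middle" and ab: "r a < r b"
  shows "scale t r ((extreme - {c}) \<union> {a, b}) = b"
proof (rule scale_eqI)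
  let ?Q = "(extreme - {c}) \<union> {a, b}"
  show "finite ?Q"
    using finite_extreme by simp
  show "inj_on r ?Q"
    using extreme_subset a b by (intro inj_on_rank) auto
  have "{z \<in> ?Q. r z < r b} = insert a (small - {c})"
    using c a b ab by (auto simp: smallS_def largeL_def)
  moreover have "finite small" "a \<notin> small"
    using finite_extreme a by auto
  moreover have "0 < card small"
    using c \<open>finite small\<close> card_gt_0_iff by blast
  ultimately show "card {z \<in> ?Q. r z < r b} = t - 1"
    using c card_small by (simp add: card.insert_remove)
qed simp

lemma admissible_pair_query:
  assumes "c \<in> extreme" "x \<in> middle" "y \<in> middle" "x \<noteq> y"
  shows "admissible_query k n ((extreme - {c}) \<union> {x, y})"
proof -
  have "card (insert x (insert y (extreme - {c}))) = k"
    using assms finite_extreme card_extreme k_ge_2 by (simp add: card_insert_if)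
  then show ?thesis
    using assms extreme_subset by (auto simp: admissible_query_def insert_commute)
qed

lemma query_compares_large:
  assumes "c \<in> large"
  shows "query_compares (scale t r) (\<lambda>x y. (extreme - {c}) \<union> {x, y}) (\<lambda>x y. r x < r y) middle"
  unfolding query_compares_def
proof (intro ballI impI)
  fix x y assume xy: "x \<in> middle" "y \<in> middle" "x \<noteq> y"
  then have "r x < r y \<or> r y < r x"
    by (intro rank_less_or_greater) auto
  then show "scale t r ((extreme - {c}) \<union> {x, y}) = x \<longleftrightarrow> r x < r y"
  proof
    assume "r x < r y"
    then show ?thesis
      using scale_pair_query_large[OF assms xy(1,2)] by simp
  next
    assume yx: "r y < r x"
    then have "scale t r ((extreme - {c}) \<union> {y, x}) = y"
      by (rule scale_pair_query_large[OF assms xy(2,1)])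
    then show ?thesis
      using xy(3) yx by (simp add: insert_commute)
  qed
qed

lemma query_compares_small:
  assumes "c \<in> small"
  shows "query_compares (scale t r) (\<lambda>x y. (extreme - {c}) \<union> {x, y}) (\<lambda>x y. r y < r x) middle"
  unfolding query_compares_def
proof (intro ballI impI)
  fix x y assume xy: "x \<in> middle" "y \<in> middle" "x \<noteq> y"
  then have "r x < r y \<or> r y < r x"
    by (intro rank_less_or_greater) auto
  then show "scale t r ((extreme - {c}) \<union> {x, y}) = x \<longleftrightarrow> r y < r x"
  proof
    assume xy': "r x < r y"
    then have "scale t r ((extreme - {c}) \<union> {x, y}) = y"
      by (rule scale_pair_query_small[OF assms xy(1,2)])
    then show ?thesis
      using xy(3) xy' by simp
  next
    assume "r y < r x"
    then show ?thesis
      using scale_pair_query_small[OF assms xy(2,1)] by (simp add: insert_commute)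
  qed
qed

lemma sorted_run_msort_middle:
  assumes c: "c \<in> extreme" and xs: "set xs = middle" "distinct xs"
  defines "ms \<equiv> run_comp (scale t r) (msort_comp (\<lambda>x y. (extreme - {c}) \<union> {x, y}) xs)"
  shows "sorted_wrt (\<lambda>x y. r x < r y) ms \<or> sorted_wrt (\<lambda>x y. r y < r x) ms"
proof -
  have total: "totalp_on middle (\<lambda>x y. r x < r y)" "totalp_on middle (\<lambda>x y. r y < r x)"
    using rank_less_or_greater by (auto intro!: totalp_onI)
  have trans: "transp (\<lambda>x y. r x < r y)" "transp (\<lambda>x y. r y < r x)"
    by (auto intro: transpI)
  show ?thesis
    using c
  proof
    assume "c \<in> small"
    then show ?thesis
      unfolding ms_def using sorted_run_msort_comp[OF trans(2) total(2) query_compares_small] xs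
      by simp
  next
    assume "c \<in> large"
    then show ?thesis
      unfolding ms_def using sorted_run_msort_comp[OF trans(1) total(1) query_compares_large] xs
      by simp
  qed
qed

definition pivot :: nat where
  "pivot = Min extreme"

definition middle_list :: "nat list" where
  "middle_list = filter (\<lambda>x. x \<notin> extreme) [0..<n]"

definition sorted_middle :: "nat list" where
  "sorted_middle = run_comp (scale t r) (msort_comp (\<lambda>x y. (extreme - {pivot}) \<union> {x, y}) middle_list)"

lemma pivot_extreme: "pivot \<in> extreme"
  unfolding pivot_def using finite_extreme card_extreme k_ge_2 by (intro Min_in) auto

lemma middle_list: "set middle_list = middle" "distinct middle_list" "length middle_list = n - (k - 1)"
proof -
  show set: "set middle_list = middle" and distinct: "distinct middle_list"
    by (auto simp: middle_list_def)
  show "length middle_list = n - (k - 1)"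
    using distinct_card[OF distinct] set card_middle by simp
qed

lemma sorted_middle: "set sorted_middle = middle" "distinct sorted_middle" "k \<le> length sorted_middle"
  using middle_list n_large card_middle by (auto simp: sorted_middle_def card_distinct)

lemma extremes_and_order_stages:
  "run_comp (scale t r) (extremes_and_order k t n) =
    (extreme, run_comp (scale t r) (orient_comp k t sorted_middle))"
  "cost_comp (scale t r) (extremes_and_order k t n) = (n - (k - 1)) +
    cost_comp (scale t r) (msort_comp (\<lambda>x y. (extreme - {pivot}) \<union> {x, y}) middle_list) + 1"
  "queries_ok (admissible_query k n) (scale t r) (extremes_and_order k t n) \<longleftrightarrow>
    queries_ok (admissible_query k n) (scale t r)
      (msort_comp (\<lambda>x y. (extreme - {pivot}) \<union> {x, y}) middle_list) \<and>
    admissible_query k n (set (take k sorted_middle))"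
  using tournament_initial
  by (simp_all add: extremes_and_order_def orient_comp_def pivot_def middle_list_def sorted_middle_def)

lemma queries_ok_extremes_and_order:
  "queries_ok (admissible_query k n) (scale t r) (extremes_and_order k t n)"
  unfolding extremes_and_order_stages
proof
  show "queries_ok (admissible_query k n) (scale t r)
      (msort_comp (\<lambda>x y. (extreme - {pivot}) \<union> {x, y}) middle_list)"
    using middle_list admissible_pair_query[OF pivot_extreme] by (intro queries_ok_msort_comp) auto
  show "admissible_query k n (set (take k sorted_middle))"
    using sorted_middle by (auto simp: admissible_query_def distinct_card dest: in_set_takeD)
qed

lemma cost_extremes_and_order:
  assumes "n \<le> 2 ^ L"
  shows "cost_comp (scale t r) (extremes_and_order k t n) \<le> n + n * L + 1"
proof -
  have "cost_comp (scale t r) (msort_comp (\<lambda>x y. (extreme - {pivot}) \<union> {x, y}) middle_list)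
      \<le> length middle_list * L"
    using middle_list(3) assms by (intro cost_msort_comp) simp
  also have "\<dots> \<le> n * L"
    using middle_list(3) by simp
  finally show ?thesis
    unfolding extremes_and_order_stages by simp
qed

lemma correct_output_extremes_and_order:
  "correct_output k t n r (run_comp (scale t r) (extremes_and_order k t n))"
proof -
  have "sorted_wrt (\<lambda>x y. r x < r y) sorted_middle \<or> sorted_wrt (\<lambda>x y. r y < r x) sorted_middle"
    unfolding sorted_middle_def using pivot_extreme middle_list by (intro sorted_run_msort_middle)
  then have "sorted_wrt (\<lambda>x y. r x < r y) (run_comp (scale t r) (orient_comp k t sorted_middle)) \<or>
      (2 * t = k + 1 \<and>
        sorted_wrt (\<lambda>x y. r y < r x) (run_comp (scale t r) (orient_comp k t sorted_middle)))"
    using t_pos t_le_k sorted_middle(3) by (intro sorted_run_orient_comp)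
  moreover have "set (run_comp (scale t r) (orient_comp k t sorted_middle)) = middle"
    using sorted_middle by (simp add: orient_comp_def)
  ultimately show ?thesis
    unfolding correct_output_def extremes_and_order_stages by simp
qed

end

lemma qtree_of_extremes_and_order:
  assumes "2 \<le> k" "1 \<le> t" "t \<le> k" "2 * k \<le> n" "bij_betw r {..<n} {..<n}"
  defines "T \<equiv> qtree_of (extremes_and_order k t n)"
  shows "valid_run k t n T r" and "real (cost t T r) \<le> real (n + n * ceillog2 n + 1)"
    and "correct_output k t n r (result t T r)"
proof -
  interpret hidden_order k t n r
    using assms by unfold_locales
  show "valid_run k t n T r"
    using queries_ok_extremes_and_order by (simp add: T_def valid_run_qtree_of)
  show "real (cost t T r) \<le> real (n + n * ceillog2 n + 1)"
    using cost_extremes_and_order[OF le_two_power_ceillog2] by (simp only: T_def cost_qtree_of of_nat_le_iff)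
  show "correct_output k t n r (result t T r)"
    using correct_output_extremes_and_order by (simp add: T_def result_qtree_of)
qed

lemma n_log_n_bound:
  obtains C :: real where
    "\<forall>\<^sub>F n in sequentially. real (n + n * ceillog2 n + 1) \<le> C * real n * ln (real n)"
proof -
  have "(\<lambda>n. real n + real n * (log 2 (real n) + 1) + 1) \<in> O(\<lambda>n. real n * ln (real n))"
    by real_asymp
  then obtain C where C: "\<forall>\<^sub>F n in sequentially.
      norm (real n + real n * (log 2 (real n) + 1) + 1) \<le> C * norm (real n * ln (real n))"
    by (elim landau_o.bigE)
  have "\<forall>\<^sub>F n in sequentially. real (n + n * ceillog2 n + 1) \<le> C * real n * ln (real n)"
    using C eventually_gt_at_top[of 0]
  proof eventually_elim
    case (elim n)
    have "real n * real (ceillog2 n) \<le> real n * (log 2 (real n) + 1)"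
      using ceillog2_less_log[of n] elim(2) by (intro mult_left_mono) auto
    moreover have "0 \<le> log 2 (real n)" "0 \<le> ln (real n)"
      using elim(2) by auto
    ultimately show ?case
      using elim(1) by (simp add: abs_of_nonneg)
  qed
  then show thesis
    by (rule that)
qed

theorem mainTheorem1:
  fixes k t :: nat
  assumes "2 \<le> k" and "1 \<le> t" and "t \<le> k"
  shows "\<exists>C::real. \<forall>\<^sub>F n in sequentially. \<exists>T::qtree.
           \<forall>r. bij_betw r {..<n} {..<n} \<longrightarrow>
               valid_run k t n T r \<and>
               real (cost t T r) \<le> C * real n * ln (real n) \<and>
               correct_output k t n r (result t T r)"
proof -
  obtain C where C: "\<forall>\<^sub>F n in sequentially. real (n + n * ceillog2 n + 1) \<le> C * real n * ln (real n)"
    using n_log_n_bound .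
  have "\<forall>\<^sub>F n in sequentially. \<exists>T. \<forall>r. bij_betw r {..<n} {..<n} \<longrightarrow>
      valid_run k t n T r \<and> real (cost t T r) \<le> C * real n * ln (real n) \<and>
      correct_output k t n r (result t T r)"
    using C eventually_ge_at_top[of "2 * k"]
  proof eventually_elim
    case (elim n)
    show ?case
      using qtree_of_extremes_and_order[OF assms elim(2)] order_trans[OF _ elim(1)] by blast
  qed
  then show ?thesis
    by blast
qed

end
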